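(* Let $R$ be a commutative ring which is free as an abelian group with $\mathbb{Z}$-basis $V$, let $n\ge2$, $p$ a prime, and let $\mathfrak{g}=\mathfrak{sl}_n(\mathbb{F}_p[V])$. Then the first Lie algebra homology of $\mathrm{gr}_*(\Gamma(SL_n(R),p))$ is $$H_1(\mathrm{gr}_*(\Gamma(SL_n(R),p)))=(\mathfrak{g}\otimes_{\mathbb{F}_p}\langle t\rangle)\oplus\Big(\bigoplus_{i\ge2}H_1(\mathfrak{g})\otimes_{\mathbb{F}_p}\langle t^i\rangle\Big),$$ where $\langle t^i\rangle$ is the one-dimensional $\mathbb{F}_p$-span of $t^i$.
   Context: $\mathbb{F}_p[V]=R\otimes_{\mathbb{Z}}\mathbb{Z}/p=R/pR$; $\mathfrak{sl}_n(\mathbb{F}_p[V])$ is the Lie algebra of traceless $n\times n$ matrices over $R/pR$ with bracket $AB-BA$. For a Lie algebra $\mathfrak{h}$ over $\mathbb{F}_p$, $H_1(\mathfrak{h})=\mathfrak{h}/[\mathfrak{h},\mathfrak{h}]$. $\Gamma_r=\Gamma(SL_n(R),p^r)=\ker(SL_n(R)\to SL_n(R/p^rR))$, and $\mathrm{gr}_*(\Gamma(SL_n(R),p))=\bigoplus_{r\ge1}\Gamma_r/\Gamma_{r+1}$ (each summand an $\mathbb{F}_p$-vector space) with Lie bracket induced bilinearly by the group commutator $g^{-1}h^{-1}gh$, which maps $\Gamma_r/\Gamma_{r+1}\times\Gamma_s/\Gamma_{s+1}\to\Gamma_{r+s}/\Gamma_{r+s+1}$. *)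

theory Defs
  imports "HOL-Analysis.Determinants" "HOL-Algebra.QuotRing" "HOL-Algebra.Generated_Groups" "HOL-Computational_Algebra.Primes"
begin

definition free_Z_basis :: "'a::comm_ring_1 set \<Rightarrow> bool" where
  "free_Z_basis V \<longleftrightarrow>
     (\<forall>x. \<exists>c :: 'a \<Rightarrow> int. finite {v \<in> V. c v \<noteq> 0} \<and>
            x = (\<Sum>v\<in>{v \<in> V. c v \<noteq> 0}. of_int (c v) * v)) \<and>
     (\<forall>c :: 'a \<Rightarrow> int. finite {v \<in> V. c v \<noteq> 0} \<and>
            (\<Sum>v\<in>{v \<in> V. c v \<noteq> 0}. of_int (c v) * v) = 0 \<longrightarrow> (\<forall>v\<in>V. c v = 0))"

definition type_ring :: "'a::comm_ring_1 ring" where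
  "type_ring = \<lparr>carrier = UNIV, mult = (*), one = 1, zero = 0, add = (+)\<rparr>"

text \<open>F_p[V] = R / pR.\<close>
definition FpV :: "nat \<Rightarrow> 'a::comm_ring_1 set ring" where
  "FpV p = type_ring Quot (PIdl\<^bsub>type_ring\<^esub> (of_nat p))"

definition mat_mul_K :: "('b, 'c) ring_scheme \<Rightarrow> ('n::finite \<Rightarrow> 'n \<Rightarrow> 'b) \<Rightarrow> ('n \<Rightarrow> 'n \<Rightarrow> 'b) \<Rightarrow> ('n \<Rightarrow> 'n \<Rightarrow> 'b)" where
  "mat_mul_K K A B = (\<lambda>i j. finsum K (\<lambda>k. A i k \<otimes>\<^bsub>K\<^esub> B k j) UNIV)"

definition trace_K :: "('b, 'c) ring_scheme \<Rightarrow> ('n::finite \<Rightarrow> 'n \<Rightarrow> 'b) \<Rightarrow> 'b" where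
  "trace_K K A = finsum K (\<lambda>i. A i i) UNIV"

definition sl_K :: "('b, 'c) ring_scheme \<Rightarrow> ('n::finite \<Rightarrow> 'n \<Rightarrow> 'b) monoid" where
  "sl_K K = \<lparr>carrier = {A. (\<forall>i j. A i j \<in> carrier K) \<and> trace_K K A = \<zero>\<^bsub>K\<^esub>},
            mult = (\<lambda>A B i j. A i j \<oplus>\<^bsub>K\<^esub> B i j),
            one = (\<lambda>i j. \<zero>\<^bsub>K\<^esub>)\<rparr>"

definition lie_bracket_K :: "('b, 'c) ring_scheme \<Rightarrow> ('n::finite \<Rightarrow> 'n \<Rightarrow> 'b) \<Rightarrow> ('n \<Rightarrow> 'n \<Rightarrow> 'b) \<Rightarrow> ('n \<Rightarrow> 'n \<Rightarrow> 'b)" where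
  "lie_bracket_K K A B = (\<lambda>i j. mat_mul_K K A B i j \<ominus>\<^bsub>K\<^esub> mat_mul_K K B A i j)"

text \<open>H_1(sl_n(K)) = sl_n(K) / [sl_n(K), sl_n(K)]; over F_p the span of the brackets is
  the additive subgroup they generate.\<close>
definition H1_sl_K :: "('b, 'c) ring_scheme \<Rightarrow> ('n::finite \<Rightarrow> 'n \<Rightarrow> 'b) set monoid" where
  "H1_sl_K K = sl_K K Mod generate (sl_K K)
      {lie_bracket_K K A B | A B. A \<in> carrier (sl_K K) \<and> B \<in> carrier (sl_K K)}"

definition SL_grp :: "('a::comm_ring_1 ^ 'n ^ 'n) monoid" where
  "SL_grp = \<lparr>carrier = {A. det A = 1}, mult = (**), one = mat 1\<rparr>"

definition Gamma :: "nat \<Rightarrow> nat \<Rightarrow> ('a::comm_ring_1 ^ 'n ^ 'n) set" where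
  "Gamma p r = {A \<in> carrier SL_grp. \<forall>i j. of_nat (p ^ r) dvd (A $ i $ j - mat 1 $ i $ j)}"

definition grp_comm :: "('a::comm_ring_1 ^ 'n ^ 'n) \<Rightarrow> ('a ^ 'n ^ 'n) \<Rightarrow> ('a ^ 'n ^ 'n)" where
  "grp_comm g h = inv\<^bsub>SL_grp\<^esub> g ** inv\<^bsub>SL_grp\<^esub> h ** g ** h"

definition gr_deg :: "nat \<Rightarrow> nat \<Rightarrow> ('a::comm_ring_1 ^ 'n ^ 'n) set monoid" where
  "gr_deg p r = (SL_grp\<lparr>carrier := Gamma p r\<rparr>) Mod (Gamma p (Suc r))"

text \<open>Brackets landing in degree r: [x Gamma_(a+1), y Gamma_(b+1)] = comm(x,y) Gamma_(a+b+1), a+b=r.\<close>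
definition brackets_deg :: "nat \<Rightarrow> nat \<Rightarrow> ('a::comm_ring_1 ^ 'n ^ 'n) set set" where
  "brackets_deg p r = {Gamma p (Suc r) #>\<^bsub>SL_grp\<^esub> grp_comm x y | x y a b.
       1 \<le> a \<and> 1 \<le> b \<and> a + b = r \<and> x \<in> Gamma p a \<and> y \<in> Gamma p b}"

definition H1_gr_deg :: "nat \<Rightarrow> nat \<Rightarrow> ('a::comm_ring_1 ^ 'n ^ 'n) set set monoid" where
  "H1_gr_deg p r = gr_deg p r Mod generate (gr_deg p r) (brackets_deg p r)"

end

theory Submission
  imports Defs
begin

text \<open>
  Since R is free over Z, multiplication by p is injective on R, so every A in Gamma_r (r >= 1)
  is uniquely 1 + p^r X, and A |-> X mod p is a homomorphism Gamma_r -> sl_n(F_p[V]) with kernel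
  Gamma_(r+1).  Its values are traceless because det (1 + e X) = 1 + e tr X mod e^2, and it is
  onto because modulo p every traceless matrix is a sum of matrices c E_ij (i ~= j) and
  c (E_ii - E_jj), all of which lift to SL_n(R).  So each graded piece is a copy of g.  The
  commutator of 1 + p^a X and 1 + p^b Y is 1 + p^(a+b) [X, Y] mod p^(a+b+1), so the bracket of
  gr_* becomes the Lie bracket of g.  No bracket lands in degree 1, while in degree i >= 2 every
  Lie bracket already arises from degrees 1 and i - 1; hence H_1 is g in degree 1 and H_1(g) in
  every higher degree.
\<close>

section \<open>The ring \<open>R\<close> and its reduction modulo \<open>p\<close>\<close>

lemma cring_type_ring: "cring (type_ring :: 'a::comm_ring_1 ring)"
proof (rule cringI)
  show "abelian_group (type_ring :: 'a ring)"
    by (rule abelian_groupI) (auto simp: type_ring_def algebra_simps intro: exI[of _ "- _"])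
  show "comm_monoid (type_ring :: 'a ring)"
    by (rule comm_monoidI) (auto simp: type_ring_def algebra_simps)
qed (auto simp: type_ring_def algebra_simps)

lemma type_ring_simps [simp]:
  "carrier (type_ring :: 'a::comm_ring_1 ring) = UNIV"
  "x \<oplus>\<^bsub>(type_ring :: 'a ring)\<^esub> y = x + y"
  "x \<otimes>\<^bsub>(type_ring :: 'a ring)\<^esub> y = x * y"
  "\<zero>\<^bsub>(type_ring :: 'a ring)\<^esub> = 0"
  "\<one>\<^bsub>(type_ring :: 'a ring)\<^esub> = 1"
  by (simp_all add: type_ring_def)

lemma type_ring_a_inv [simp]: "\<ominus>\<^bsub>(type_ring :: 'a::comm_ring_1 ring)\<^esub> x = - x"
proof -
  interpret cring "type_ring :: 'a ring" by (rule cring_type_ring)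
  show ?thesis by (rule minus_equality) simp_all
qed

lemma type_ring_minus [simp]: "x \<ominus>\<^bsub>(type_ring :: 'a::comm_ring_1 ring)\<^esub> y = x - y"
  by (simp add: a_minus_def)

lemma type_ring_finsum [simp]:
  assumes "finite A"
  shows "finsum (type_ring :: 'a::comm_ring_1 ring) f A = sum f A"
proof -
  interpret cring "type_ring :: 'a ring" by (rule cring_type_ring)
  from assms show ?thesis by induction (simp_all add: finsum_insert)
qed

lemma free_Z_basis_torsion_free:
  fixes V :: "'a::comm_ring_1 set"
  assumes V: "free_Z_basis V" and "m > 0" and "of_nat m * y = (0::'a)"
  shows "y = 0"
proof -
  have span: "\<exists>c :: 'a \<Rightarrow> int. finite {v \<in> V. c v \<noteq> 0} \<and>
                x = (\<Sum>v\<in>{v \<in> V. c v \<noteq> 0}. of_int (c v) * v)" for x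
    using V unfolding free_Z_basis_def by blast
  have indep: "finite {v \<in> V. c v \<noteq> 0} \<Longrightarrow>
                (\<Sum>v\<in>{v \<in> V. c v \<noteq> 0}. of_int (c v) * v) = 0 \<Longrightarrow> v \<in> V \<Longrightarrow> c v = 0" for c v
    using V unfolding free_Z_basis_def by blast+
  obtain c where fin: "finite {v \<in> V. c v \<noteq> 0}"
    and y: "y = (\<Sum>v\<in>{v \<in> V. c v \<noteq> 0}. of_int (c v) * v)"
    using span by blast
  define c' where "c' v = int m * c v" for v
  have supp: "{v \<in> V. c' v \<noteq> 0} = {v \<in> V. c v \<noteq> 0}"
    using \<open>m > 0\<close> by (auto simp: c'_def)
  have "(\<Sum>v\<in>{v \<in> V. c' v \<noteq> 0}. of_int (c' v) * v) = of_nat m * y"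
    unfolding supp y by (simp add: c'_def sum_distrib_left mult.assoc)
  then have "c' v = 0" if "v \<in> V" for v
    using indep[of c' v] fin that \<open>of_nat m * y = 0\<close> unfolding supp by simp
  then have "{v \<in> V. c v \<noteq> 0} = {}" using \<open>m > 0\<close> by (auto simp: c'_def)
  then show ?thesis using y by simp
qed

definition reduce :: "nat \<Rightarrow> 'a::comm_ring_1 \<Rightarrow> 'a set" where
  "reduce p x = PIdl\<^bsub>type_ring\<^esub> (of_nat p) +>\<^bsub>(type_ring :: 'a ring)\<^esub> x"

lemma ideal_PIdl_type_ring: "ideal (PIdl\<^bsub>type_ring\<^esub> x) (type_ring :: 'a::comm_ring_1 ring)"
  by (rule cring.cgenideal_ideal[OF cring_type_ring]) simp

lemma cring_FpV: "cring (FpV p :: 'a::comm_ring_1 set ring)"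
  unfolding FpV_def by (rule ideal.quotient_is_cring[OF ideal_PIdl_type_ring cring_type_ring])

lemma ring_hom_cring_reduce: "ring_hom_cring (type_ring :: 'a::comm_ring_1 ring) (FpV p) (reduce p)"
  unfolding FpV_def reduce_def[abs_def]
  by (rule ideal.rcos_ring_hom_cring[OF ideal_PIdl_type_ring cring_type_ring])

lemma reduce_eq_iff: "reduce p x = reduce p y \<longleftrightarrow> (of_nat p :: 'a::comm_ring_1) dvd (x - y)"
proof -
  have coset: "reduce p x = {z * of_nat p + x | z. True}" for x :: 'a
    unfolding reduce_def a_r_coset_def' cgenideal_def by auto
  show ?thesis
  proof
    assume "reduce p x = reduce p y"
    moreover have "x \<in> reduce p x" unfolding coset by (auto intro: exI[of _ 0])
    ultimately have "x \<in> reduce p y" by simp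
    then show "(of_nat p :: 'a) dvd (x - y)" unfolding coset by auto
  next
    assume "(of_nat p :: 'a) dvd (x - y)"
    then obtain w where w: "x - y = of_nat p * w" by (auto elim: dvdE)
    have "z * of_nat p + x = (z + w) * of_nat p + y" "z * of_nat p + y = (z - w) * of_nat p + x"
      for z using w by (simp_all add: algebra_simps)
    then show "reduce p x = reduce p y" unfolding coset by blast
  qed
qed

lemma carrier_FpV: "carrier (FpV p :: 'a::comm_ring_1 set ring) = range (reduce p)"
  unfolding FpV_def FactRing_def reduce_def[abs_def] A_RCOSETS_def' by auto

lemma reduce_eq_zero_iff: "reduce p x = \<zero>\<^bsub>FpV p\<^esub> \<longleftrightarrow> (of_nat p :: 'a::comm_ring_1) dvd x"
proof -
  have "\<zero>\<^bsub>FpV p\<^esub> = reduce p (0::'a)"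
    using ring_hom_cring.hom_zero[OF ring_hom_cring_reduce, of p] by (metis type_ring_simps(4))
  then show ?thesis by (simp add: reduce_eq_iff)
qed

lemma
  fixes x y :: "'a::comm_ring_1" and f :: "'b \<Rightarrow> 'a"
  shows reduce_add: "reduce p (x + y) = reduce p x \<oplus>\<^bsub>FpV p\<^esub> reduce p y"
    and reduce_mult: "reduce p (x * y) = reduce p x \<otimes>\<^bsub>FpV p\<^esub> reduce p y"
    and reduce_diff: "reduce p (x - y) = reduce p x \<ominus>\<^bsub>FpV p\<^esub> reduce p y"
    and reduce_closed: "reduce p x \<in> carrier (FpV p)"
    and reduce_sum: "finite A \<Longrightarrow> reduce p (sum f A) = finsum (FpV p) (\<lambda>i. reduce p (f i)) A"
proof -
  interpret h: ring_hom_cring "type_ring :: 'a ring" "FpV p" "reduce p" by (rule ring_hom_cring_reduce)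
  show "reduce p (x + y) = reduce p x \<oplus>\<^bsub>FpV p\<^esub> reduce p y"
    using h.hom_add[of x y] by simp
  show "reduce p (x * y) = reduce p x \<otimes>\<^bsub>FpV p\<^esub> reduce p y"
    using h.hom_mult[of x y] by simp
  show "reduce p (x - y) = reduce p x \<ominus>\<^bsub>FpV p\<^esub> reduce p y"
    using h.hom_a_inv[of y] h.hom_add[of x "- y"] by (simp add: a_minus_def)
  show "reduce p x \<in> carrier (FpV p)" by simp
  show "finite A \<Longrightarrow> reduce p (sum f A) = finsum (FpV p) (\<lambda>i. reduce p (f i)) A"
    using h.hom_finsum[of f A] by (simp add: comp_def)
qed

section \<open>The group \<open>SL\<^sub>n(R)\<close> and its congruence subgroups\<close>

lemma det_row_sum:
  fixes b :: "'n::finite \<Rightarrow> 'a::comm_ring_1 ^ 'n" and v :: "'k \<Rightarrow> 'a ^ 'n"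
  assumes "finite S"
  shows "det ((\<chi> l. if l = j then (\<Sum>k\<in>S. c k *s v k) else b l) :: 'a^'n^'n)
       = (\<Sum>k\<in>S. c k * det ((\<chi> l. if l = j then v k else b l) :: 'a^'n^'n))"
  using assms
proof (induction S rule: finite_induct)
  case empty
  show ?case using det_row_0[of j b] by (simp only: sum.empty)
next
  case (insert x S)
  have "det ((\<chi> l. if l = j then (\<Sum>k\<in>insert x S. c k *s v k) else b l) :: 'a^'n^'n)
      = det ((\<chi> l. if l = j then (\<lambda>_. c x *s v x) l + (\<lambda>_. \<Sum>k\<in>S. c k *s v k) l else b l) :: 'a^'n^'n)"
    using insert by (simp add: sum.insert cong: if_cong)
  also have "\<dots> = det ((\<chi> l. if l = j then c x *s (\<lambda>_. v x) l else b l) :: 'a^'n^'n)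
      + det ((\<chi> l. if l = j then (\<Sum>k\<in>S. c k *s v k) else b l) :: 'a^'n^'n)"
    by (subst det_row_add) simp
  also have "\<dots> = c x * det ((\<chi> l. if l = j then v x else b l) :: 'a^'n^'n)
      + (\<Sum>k\<in>S. c k * det ((\<chi> l. if l = j then v k else b l) :: 'a^'n^'n))"
    using insert det_row_mul[of j "c x" "\<lambda>_. v x" b] by simp
  finally show ?case using insert by simp
qed

text \<open>The adjugate, written column by column via Cramer's rule.\<close>

lemma exists_right_adjugate:
  fixes A :: "'a::comm_ring_1^'n::finite^'n"
  shows "\<exists>B. A ** B = mat (det A)"
proof -
  define B :: "'a^'n^'n" where "B = (\<chi> k j. det ((\<chi> l. if l = j then axis k 1 else A $ l) :: 'a^'n^'n))"
  have "(A ** B) $ i $ j = mat (det A) $ i $ j" for i j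
  proof -
    have row_i: "(\<Sum>k\<in>UNIV. A $ i $ k *s axis k (1::'a)) = A $ i"
      by (auto simp: vec_eq_iff axis_def if_distrib sum.delta' cong: if_cong)
    have "(A ** B) $ i $ j = (\<Sum>k\<in>UNIV. A $ i $ k * det ((\<chi> l. if l = j then axis k 1 else A $ l) :: 'a^'n^'n))"
      by (simp add: matrix_matrix_mult_def B_def)
    also have "\<dots> = det ((\<chi> l. if l = j then (\<Sum>k\<in>UNIV. A $ i $ k *s axis k (1::'a)) else A $ l) :: 'a^'n^'n)"
      by (rule det_row_sum[symmetric]) simp
    also have "\<dots> = det ((\<chi> l. if l = j then A $ i else A $ l) :: 'a^'n^'n)"
      by (simp only: row_i)
    also have "\<dots> = mat (det A) $ i $ j"
    proof (cases "i = j")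
      case True
      then have "((\<chi> l. if l = j then A $ i else A $ l) :: 'a^'n^'n) = A" by (simp add: vec_eq_iff)
      then show ?thesis using True by (simp add: mat_def)
    next
      case False
      then have "det ((\<chi> l. if l = j then A $ i else A $ l) :: 'a^'n^'n) = 0"
        by (intro det_identical_rows[OF False]) (simp add: row_def vec_eq_iff)
      then show ?thesis using False by (simp add: mat_def)
    qed
    finally show ?thesis .
  qed
  then show ?thesis by (auto simp: vec_eq_iff)
qed

lemma exists_left_adjugate:
  fixes A :: "'a::comm_ring_1^'n::finite^'n"
  shows "\<exists>B. B ** A = mat (det A)"
proof -
  obtain B where "transpose A ** B = mat (det (transpose A))" using exists_right_adjugate by blast
  then have "transpose (transpose A ** B) = mat (det A)" by simp
  then show ?thesis by (auto simp: matrix_transpose_mul)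
qed

lemma SL_grp_simps [simp]:
  "carrier (SL_grp :: ('a::comm_ring_1^'n::finite^'n) monoid) = {A. det A = 1}"
  "x \<otimes>\<^bsub>(SL_grp :: ('a::comm_ring_1^'n::finite^'n) monoid)\<^esub> y = x ** y"
  "\<one>\<^bsub>(SL_grp :: ('a::comm_ring_1^'n::finite^'n) monoid)\<^esub> = mat 1"
  by (simp_all add: SL_grp_def)

lemma group_SL_grp: "group (SL_grp :: ('a::comm_ring_1^'n::finite^'n) monoid)"
proof (rule groupI)
  fix x :: "'a^'n^'n" assume x: "x \<in> carrier SL_grp"
  obtain B where "B ** x = mat (det x)" using exists_left_adjugate by blast
  then have "B ** x = mat 1" using x by simp
  moreover from this have "det B = 1" using x det_mul[of B x] by simp
  ultimately show "\<exists>y\<in>carrier SL_grp. y \<otimes>\<^bsub>SL_grp\<^esub> x = \<one>\<^bsub>SL_grp\<^esub>" by auto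
qed (auto simp: det_mul matrix_mul_assoc)

lemma SL_grp_inv:
  assumes "det (x :: 'a::comm_ring_1^'n::finite^'n) = 1"
  shows "inv\<^bsub>SL_grp\<^esub> x ** x = mat 1" "x ** inv\<^bsub>SL_grp\<^esub> x = mat 1" "det (inv\<^bsub>SL_grp\<^esub> x) = 1"
proof -
  interpret group "SL_grp :: ('a^'n^'n) monoid" by (rule group_SL_grp)
  have "x \<in> carrier SL_grp" using assms by simp
  from l_inv[OF this] r_inv[OF this] inv_closed[OF this]
  show "inv\<^bsub>SL_grp\<^esub> x ** x = mat 1" "x ** inv\<^bsub>SL_grp\<^esub> x = mat 1" "det (inv\<^bsub>SL_grp\<^esub> x) = 1"
    by simp_all
qed

definition mat_dvd :: "'a::comm_ring_1 \<Rightarrow> 'a^'n::finite^'n \<Rightarrow> bool" where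
  "mat_dvd e M \<longleftrightarrow> (\<forall>i j. e dvd M $ i $ j)"

definition smult_mat :: "'a::comm_ring_1 \<Rightarrow> 'a^'n::finite^'n \<Rightarrow> 'a^'n^'n" where
  "smult_mat c X = (\<chi> i j. c * X $ i $ j)"

lemma smult_mat_nth [simp]: "smult_mat c X $ i $ j = c * X $ i $ j"
  by (simp add: smult_mat_def)

lemma smult_mat_simps:
  "smult_mat c X ** smult_mat d Y = smult_mat (c * d) (X ** Y)"
  "smult_mat c X ** Y = smult_mat c (X ** Y)"
  "X ** smult_mat c Y = smult_mat c (X ** Y)"
  "smult_mat c X + smult_mat c Y = smult_mat c (X + Y)"
  "smult_mat c X - smult_mat c Y = smult_mat c (X - Y)"
  "smult_mat c (smult_mat d X) = smult_mat (c * d) X"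
  by (simp_all add: vec_eq_iff matrix_matrix_mult_def sum_distrib_left algebra_simps)

lemma mat_dvd_iff_smult_mat: "mat_dvd e M \<longleftrightarrow> (\<exists>X. M = smult_mat e X)"
proof
  assume "mat_dvd e M"
  then obtain d where "\<And>i j. M $ i $ j = e * d i j" unfolding mat_dvd_def dvd_def by metis
  then have "M = smult_mat e (\<chi> i j. d i j)" by (simp add: vec_eq_iff)
  then show "\<exists>X. M = smult_mat e X" by blast
qed (auto simp: mat_dvd_def)

lemma mat_dvd_mult: "mat_dvd e X \<Longrightarrow> mat_dvd f Y \<Longrightarrow> mat_dvd (e * f) (X ** Y)"
  unfolding mat_dvd_def matrix_matrix_mult_def by (auto intro!: dvd_sum mult_dvd_mono)

lemma mat_dvd_multL: "mat_dvd e X \<Longrightarrow> mat_dvd e (X ** Y)"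
  using mat_dvd_mult[of e X 1 Y] by (simp add: mat_dvd_def)

lemma mat_dvd_multR: "mat_dvd e Y \<Longrightarrow> mat_dvd e (X ** Y)"
  using mat_dvd_mult[of 1 X e Y] by (simp add: mat_dvd_def)

lemma mat_dvd_add: "mat_dvd e X \<Longrightarrow> mat_dvd e Y \<Longrightarrow> mat_dvd e (X + Y)"
  and mat_dvd_diff: "mat_dvd e X \<Longrightarrow> mat_dvd e Y \<Longrightarrow> mat_dvd e (X - Y)"
  and mat_dvd_uminus: "mat_dvd e X \<Longrightarrow> mat_dvd e (- X)"
  and mat_dvd_smult_mat: "mat_dvd e (smult_mat e Y)"
  and mat_dvd_smult_mat_mult: "mat_dvd d Y \<Longrightarrow> mat_dvd (e * d) (smult_mat e Y)"
  unfolding mat_dvd_def by (auto intro: mult_dvd_mono)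

lemma mat_dvd_trans: "mat_dvd e X \<Longrightarrow> f dvd e \<Longrightarrow> mat_dvd f X"
  unfolding mat_dvd_def by (meson dvd_trans)

lemma matrix_diff_ldistrib: "(A::'a::comm_ring_1^'n::finite^'n) ** (B - C) = A ** B - A ** C"
  by (simp add: matrix_matrix_mult_def vec_eq_iff algebra_simps sum_subtractf)

lemma matrix_add_rdistrib: "((B::'a::comm_ring_1^'n::finite^'n) + C) ** A = B ** A + C ** A"
  by (simp add: matrix_matrix_mult_def vec_eq_iff algebra_simps sum.distrib)

lemma matrix_diff_rdistrib: "((B::'a::comm_ring_1^'n::finite^'n) - C) ** A = B ** A - C ** A"
  by (simp add: matrix_matrix_mult_def vec_eq_iff algebra_simps sum_subtractf)

lemma matrix_mult_minus_one:
  fixes A B :: "'a::comm_ring_1^'n::finite^'n"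
  shows "A ** B - mat 1 = (A - mat 1) ** (B - mat 1) + (A - mat 1) + (B - mat 1)"
  by (simp add: matrix_diff_ldistrib matrix_diff_rdistrib matrix_add_ldistrib algebra_simps)

lemma Gamma_iff:
  "A \<in> Gamma p r \<longleftrightarrow> det A = 1 \<and> mat_dvd ((of_nat p :: 'a::comm_ring_1) ^ r) (A - mat 1)"
  by (simp add: Gamma_def mat_dvd_def of_nat_power)

lemma Gamma_mult:
  assumes "A \<in> Gamma p r" "B \<in> Gamma p r"
  shows "A ** B \<in> Gamma p r"
proof -
  let ?e = "(of_nat p :: 'a::comm_ring_1) ^ r"
  have "mat_dvd ?e ((A - mat 1) ** (B - mat 1) + (A - mat 1) + (B - mat 1))"
    using assms unfolding Gamma_iff by (blast intro: mat_dvd_add mat_dvd_multL)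
  then have "mat_dvd ?e (A ** B - mat 1)" by (simp only: matrix_mult_minus_one)
  then show ?thesis using assms by (simp add: Gamma_iff det_mul)
qed

lemma Gamma_inv:
  assumes "A \<in> Gamma p r"
  shows "inv\<^bsub>SL_grp\<^esub> A \<in> Gamma p r"
proof -
  have dA: "det A = 1" using assms by (simp add: Gamma_iff)
  have "inv\<^bsub>SL_grp\<^esub> A - mat 1 = - (inv\<^bsub>SL_grp\<^esub> A ** (A - mat 1))"
    using SL_grp_inv[OF dA] by (simp add: matrix_diff_ldistrib)
  then show ?thesis using assms SL_grp_inv[OF dA]
    by (auto simp: Gamma_iff intro!: mat_dvd_uminus mat_dvd_multR)
qed

lemma one_in_Gamma: "mat 1 \<in> Gamma p r"
  by (simp add: Gamma_iff mat_dvd_def)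

lemma Gamma_antimono: "r \<le> s \<Longrightarrow> Gamma p s \<subseteq> Gamma p r"
  by (auto simp: Gamma_iff intro: mat_dvd_trans[OF _ le_imp_power_dvd])

lemma subgroup_Gamma: "subgroup (Gamma p r) (SL_grp :: ('a::comm_ring_1^'n::finite^'n) monoid)"
proof -
  interpret group "SL_grp :: ('a^'n^'n) monoid" by (rule group_SL_grp)
  show ?thesis
  proof (rule subgroupI)
    show "Gamma p r \<subseteq> carrier SL_grp" by (auto simp: Gamma_iff)
    show "Gamma p r \<noteq> {}" using one_in_Gamma by blast
  qed (use one_in_Gamma Gamma_mult Gamma_inv in auto)
qed

lemma group_Gamma: "group ((SL_grp :: ('a::comm_ring_1^'n::finite^'n) monoid)\<lparr>carrier := Gamma p r\<rparr>)"
  by (rule subgroup.subgroup_is_group[OF subgroup_Gamma group_SL_grp])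

section \<open>Determinants near the identity\<close>

lemma prod_one_plus_mod_square:
  fixes e :: "'a::comm_ring_1"
  assumes "finite S"
  shows "e ^ 2 dvd (\<Prod>i\<in>S. 1 + e * f i) - 1 - e * (\<Sum>i\<in>S. f i)"
  using assms
proof (induction S rule: finite_induct)
  case empty then show ?case by simp
next
  case (insert a S)
  then obtain t where t: "(\<Prod>i\<in>S. 1 + e * f i) = 1 + e * (\<Sum>i\<in>S. f i) + e ^ 2 * t"
    by (auto elim!: dvdE simp: algebra_simps)
  have "(\<Prod>i\<in>insert a S. 1 + e * f i) - 1 - e * (\<Sum>i\<in>insert a S. f i)
      = e ^ 2 * (f a * (\<Sum>i\<in>S. f i) + t + e * f a * t)"
    using insert t by (simp add: algebra_simps power2_eq_square)
  then show ?case by simp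
qed

text \<open>In the Leibniz expansion of \<open>det (1 + e X)\<close> every non-identity permutation moves at
  least two indices and so picks up two off-diagonal factors divisible by \<open>e\<close>.\<close>

lemma det_one_plus_mod_square:
  fixes X :: "'a::comm_ring_1^'n::finite^'n"
  shows "e ^ 2 dvd det (mat 1 + smult_mat e X) - 1 - e * trace X"
proof -
  let ?M = "mat 1 + smult_mat e X"
  let ?P = "{\<sigma>. \<sigma> permutes (UNIV :: 'n set)}"
  let ?t = "\<lambda>\<sigma>. of_int (sign \<sigma>) * (\<Prod>i\<in>UNIV. ?M $ i $ \<sigma> i)"
  have diag: "?M $ i $ i = 1 + e * X $ i $ i" for i by (simp add: mat_def)
  have off_diag: "i \<noteq> j \<Longrightarrow> ?M $ i $ j = e * X $ i $ j" for i j by (simp add: mat_def)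
  have det_split: "det ?M = ?t id + sum ?t (?P - {id})"
    unfolding det_def by (rule sum.remove) (simp_all add: permutes_id)
  have "?t id = (\<Prod>i\<in>UNIV. 1 + e * X $ i $ i)"
    by (simp only: diag sign_id of_int_1 mult_1 id_apply)
  then have identity_term: "e ^ 2 dvd ?t id - 1 - e * trace X"
    unfolding trace_def by (simp only: prod_one_plus_mod_square finite)
  have other_terms: "e ^ 2 dvd sum ?t (?P - {id})"
  proof (rule dvd_sum)
    fix \<sigma> assume "\<sigma> \<in> ?P - {id}"
    then have perm: "\<sigma> permutes UNIV" and "\<sigma> \<noteq> id" by auto
    then obtain i where i: "\<sigma> i \<noteq> i" by (metis eq_id_iff)
    let ?j = "\<sigma> i"
    have j: "\<sigma> ?j \<noteq> ?j" using i permutes_inj[OF perm] by (metis injD)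
    have "(\<Prod>k\<in>UNIV. ?M $ k $ \<sigma> k)
        = ?M $ i $ \<sigma> i * (?M $ ?j $ \<sigma> ?j * (\<Prod>k\<in>UNIV - {i} - {?j}. ?M $ k $ \<sigma> k))"
      using i by (simp add: prod.remove[of UNIV i] prod.remove[of "UNIV - {i}" ?j])
    also have "\<dots> = e ^ 2 * (X $ i $ \<sigma> i * X $ ?j $ \<sigma> ?j * (\<Prod>k\<in>UNIV - {i} - {?j}. ?M $ k $ \<sigma> k))"
      unfolding off_diag[OF i[symmetric]] off_diag[OF j[symmetric]] power2_eq_square
      by (simp only: ac_simps)
    finally show "e ^ 2 dvd ?t \<sigma>" by simp
  qed
  have "det ?M - 1 - e * trace X = (?t id - 1 - e * trace X) + sum ?t (?P - {id})"
    unfolding det_split by (simp only: algebra_simps)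
  with dvd_add[OF identity_term other_terms] show ?thesis by (simp only:)
qed

definition mat_unit :: "'a::comm_ring_1 \<Rightarrow> 'n::finite \<Rightarrow> 'n \<Rightarrow> 'a^'n^'n" where
  "mat_unit c i j = (\<chi> a b. if a = i \<and> b = j then c else 0)"

lemma mat_unit_nth [simp]: "mat_unit c i j $ a $ b = (if a = i \<and> b = j then c else 0)"
  by (simp add: mat_unit_def)

definition add_row_multiple :: "'n::finite \<Rightarrow> 'n \<Rightarrow> 'a::comm_ring_1 \<Rightarrow> 'a^'n^'n \<Rightarrow> 'a^'n^'n" where
  "add_row_multiple i j c A = (\<chi> k. if k = i then row i A + c *s row j A else row k A)"

lemma det_add_row_multiple: "i \<noteq> j \<Longrightarrow> det (add_row_multiple i j c A) = det A"
  unfolding add_row_multiple_def by (rule det_row_operation)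

lemma add_row_multiple_nth [simp]:
  "add_row_multiple i j c A $ a $ b = (if a = i then A $ i $ b + c * A $ j $ b else A $ a $ b)"
  by (simp add: add_row_multiple_def row_def)

lemma det_transvection:
  assumes "i \<noteq> j"
  shows "det (mat 1 + smult_mat s (mat_unit 1 i j) :: 'a::comm_ring_1^'n::finite^'n) = 1"
proof -
  have "mat 1 + smult_mat s (mat_unit 1 i j) = add_row_multiple i j s (mat 1 :: 'a^'n^'n)"
    using assms by (auto simp: vec_eq_iff mat_def)
  then show ?thesis by (simp only: det_add_row_multiple[OF assms] det_I)
qed

text \<open>A determinant-one lift of \<open>1 + s (E\<^sub>i\<^sub>i - E\<^sub>j\<^sub>j)\<close> modulo the transvections: the matrix
  \<open>E\<^sub>i\<^sub>i + E\<^sub>i\<^sub>j - E\<^sub>j\<^sub>i - E\<^sub>j\<^sub>j\<close> squares to zero.\<close>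

lemma det_one_plus_square_zero:
  assumes "i \<noteq> j"
  shows "det (mat 1 + smult_mat s (mat_unit 1 i i + mat_unit 1 i j - mat_unit 1 j i - mat_unit 1 j j)
           :: 'a::comm_ring_1^'n::finite^'n) = 1"
proof -
  let ?M = "mat 1 + smult_mat s (mat_unit 1 i i + mat_unit 1 i j - mat_unit 1 j i - mat_unit 1 j j)
    :: 'a^'n^'n"
  have "add_row_multiple j i (-1) (add_row_multiple i j (-s) (add_row_multiple j i 1 ?M)) = mat 1"
    using assms by (auto simp: vec_eq_iff mat_def algebra_simps)
  then have "det (add_row_multiple j i (-1) (add_row_multiple i j (-s) (add_row_multiple j i 1 ?M))) = 1"
    by simp
  then show ?thesis using assms by (simp add: det_add_row_multiple)
qed

lemma sl_K_simps [simp]: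
  "carrier (sl_K K) = {A. (\<forall>i j. A i j \<in> carrier K) \<and> trace_K K A = \<zero>\<^bsub>K\<^esub>}"
  "A \<otimes>\<^bsub>sl_K K\<^esub> B = (\<lambda>i j. A i j \<oplus>\<^bsub>K\<^esub> B i j)"
  "\<one>\<^bsub>sl_K K\<^esub> = (\<lambda>i j. \<zero>\<^bsub>K\<^esub>)"
  by (simp_all add: sl_K_def)

lemma (in abelian_group) trace_K_add:
  assumes "\<forall>i j. A i j \<in> carrier G" "\<forall>i j. B i j \<in> carrier G"
  shows "trace_K G (\<lambda>i j. A i j \<oplus> B i j) = trace_K G A \<oplus> trace_K G (B :: 'n::finite \<Rightarrow> 'n \<Rightarrow> 'a)"
  unfolding trace_K_def using assms by (intro finsum_addf) auto

lemma (in abelian_group) trace_K_closed: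
  "\<forall>i j. A i j \<in> carrier G \<Longrightarrow> trace_K G (A :: 'n::finite \<Rightarrow> 'n \<Rightarrow> 'a) \<in> carrier G"
  unfolding trace_K_def by (intro finsum_closed) auto

lemma (in abelian_group) comm_group_sl_K: "comm_group (sl_K G :: ('n::finite \<Rightarrow> 'n \<Rightarrow> 'a) monoid)"
proof (rule comm_groupI)
  show "\<one>\<^bsub>sl_K G\<^esub> \<in> carrier (sl_K G :: ('n \<Rightarrow> 'n \<Rightarrow> 'a) monoid)"
    by (simp add: trace_K_def finsum_zero)
next
  fix x :: "'n \<Rightarrow> 'n \<Rightarrow> 'a"
  assume x: "x \<in> carrier (sl_K G)"
  let ?y = "\<lambda>i j. \<ominus> x i j"
  have "trace_K G ?y \<oplus> trace_K G x = trace_K G (\<lambda>i j. ?y i j \<oplus> x i j)"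
    using x by (simp add: trace_K_add)
  also have "\<dots> = \<zero>"
    using x by (simp add: l_neg trace_K_def finsum_zero)
  finally have "trace_K G ?y = \<zero>" using x trace_K_closed[of ?y] by simp
  then have "?y \<in> carrier (sl_K G) \<and> ?y \<otimes>\<^bsub>sl_K G\<^esub> x = \<one>\<^bsub>sl_K G\<^esub>"
    using x by (auto simp: l_neg)
  then show "\<exists>y\<in>carrier (sl_K G). y \<otimes>\<^bsub>sl_K G\<^esub> x = \<one>\<^bsub>sl_K G\<^esub>" by blast
qed (auto simp: trace_K_add a_ac)

section \<open>The graded pieces \<open>\<Gamma>\<^sub>r/\<Gamma>\<^sub>r\<^sub>+\<^sub>1\<close>\<close>

locale p_torsion_free =
  fixes p :: nat and q :: "'a::comm_ring_1"
  assumes q_def: "q = of_nat p"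
    and q_mult_eq_0: "q * y = 0 \<Longrightarrow> y = 0"
begin

lemma qpow_mult_cancel: "q ^ k * y = q ^ k * z \<Longrightarrow> y = z"
proof (induction k arbitrary: y z)
  case (Suc k)
  have "q * (q ^ k * y - q ^ k * z) = 0" using Suc.prems by (simp add: algebra_simps)
  then have "q ^ k * y = q ^ k * z" using q_mult_eq_0 by fastforce
  then show ?case by (rule Suc.IH)
qed simp

lemma Gamma_iff_q: "A \<in> Gamma p r \<longleftrightarrow> det A = 1 \<and> mat_dvd (q ^ r) (A - mat 1)"
  by (simp add: Gamma_iff q_def)

lemma reduce_eq_iff_q: "reduce p x = reduce p y \<longleftrightarrow> q dvd x - y"
  by (simp add: reduce_eq_iff q_def)

lemma reduce_eq_zero_iff_q: "reduce p x = \<zero>\<^bsub>FpV p\<^esub> \<longleftrightarrow> q dvd x"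
  by (simp add: reduce_eq_zero_iff q_def)

text \<open>For \<open>A \<in> \<Gamma>\<^sub>r\<close> this is the unique \<open>X\<close> with \<open>A = 1 + q\<^sup>r X\<close>.\<close>

definition level_coeff :: "nat \<Rightarrow> 'a^'n::finite^'n \<Rightarrow> 'a^'n^'n" where
  "level_coeff r A = (\<chi> i j. SOME d. (A - mat 1) $ i $ j = q ^ r * d)"

definition level_map :: "nat \<Rightarrow> 'a^'n::finite^'n \<Rightarrow> 'n \<Rightarrow> 'n \<Rightarrow> 'a set" where
  "level_map r A = (\<lambda>i j. reduce p (level_coeff r A $ i $ j))"

lemma level_coeff_eqI:
  assumes "A - mat 1 = smult_mat (q ^ r) X"
  shows "level_coeff r A = X"
proof -
  have "(SOME d. (A - mat 1) $ i $ j = q ^ r * d) = X $ i $ j" for i j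
  proof -
    have X: "(A - mat 1) $ i $ j = q ^ r * X $ i $ j" using assms by simp
    then have "(A - mat 1) $ i $ j = q ^ r * (SOME d. (A - mat 1) $ i $ j = q ^ r * d)" by (rule someI)
    with X show ?thesis by (metis qpow_mult_cancel)
  qed
  then show ?thesis by (simp add: level_coeff_def vec_eq_iff)
qed

lemma Gamma_eq_one_plus_level_coeff:
  assumes "A \<in> Gamma p r"
  shows "A = mat 1 + smult_mat (q ^ r) (level_coeff r A)"
proof -
  obtain X where X: "A - mat 1 = smult_mat (q ^ r) X"
    using assms by (auto simp: Gamma_iff_q mat_dvd_iff_smult_mat)
  then have "level_coeff r A = X" by (rule level_coeff_eqI)
  with X show ?thesis by (simp add: algebra_simps)
qed

lemma level_coeff_mult:
  assumes "A \<in> Gamma p r" "B \<in> Gamma p r"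
  shows "level_coeff r (A ** B)
           = smult_mat (q ^ r) (level_coeff r A ** level_coeff r B) + level_coeff r A + level_coeff r B"
proof (rule level_coeff_eqI)
  let ?e = "q ^ r" and ?X = "level_coeff r A" and ?Y = "level_coeff r B"
  have "A ** B - mat 1 = (A - mat 1) ** (B - mat 1) + (A - mat 1) + (B - mat 1)"
    by (rule matrix_mult_minus_one)
  also have "\<dots> = smult_mat ?e ?X ** smult_mat ?e ?Y + smult_mat ?e ?X + smult_mat ?e ?Y"
    using Gamma_eq_one_plus_level_coeff[OF assms(1)] Gamma_eq_one_plus_level_coeff[OF assms(2)]
    by (metis add_diff_cancel_left')
  also have "\<dots> = smult_mat ?e (smult_mat ?e (?X ** ?Y) + ?X + ?Y)"
    unfolding smult_mat_simps(1) by (simp add: vec_eq_iff algebra_simps)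
  finally show "A ** B - mat 1 = smult_mat ?e (smult_mat ?e (?X ** ?Y) + ?X + ?Y)" .
qed

lemma q_dvd_trace_level_coeff:
  assumes "A \<in> Gamma p r" "r \<ge> 1"
  shows "q dvd trace (level_coeff r A)"
proof -
  let ?e = "q ^ r" and ?X = "level_coeff r A"
  have "det (mat 1 + smult_mat ?e ?X) = 1"
    using assms Gamma_eq_one_plus_level_coeff[OF assms(1)] by (simp add: Gamma_iff_q)
  then have "?e ^ 2 dvd ?e * trace ?X" using det_one_plus_mod_square[of ?e ?X] by simp
  then obtain w where "?e * trace ?X = ?e ^ 2 * w" by (auto elim: dvdE)
  then have "?e * trace ?X = ?e * (?e * w)" by (simp add: power2_eq_square)
  then have "trace ?X = ?e * w" by (rule qpow_mult_cancel)
  then show ?thesis using assms(2) by (simp add: dvd_power)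
qed

lemma level_map_closed:
  assumes "A \<in> Gamma p r" "r \<ge> 1"
  shows "level_map r A \<in> carrier (sl_K (FpV p))"
proof -
  have "trace_K (FpV p) (level_map r A) = reduce p (trace (level_coeff r A))"
    unfolding trace_K_def level_map_def trace_def by (simp add: reduce_sum)
  also have "\<dots> = \<zero>\<^bsub>FpV p\<^esub>"
    using q_dvd_trace_level_coeff[OF assms] by (simp add: reduce_eq_zero_iff_q)
  finally show ?thesis by (simp add: level_map_def reduce_closed)
qed

lemma level_map_mult:
  assumes "A \<in> Gamma p r" "B \<in> Gamma p r" "r \<ge> 1"
  shows "level_map r (A ** B) = level_map r A \<otimes>\<^bsub>sl_K (FpV p)\<^esub> level_map r B"
proof -
  have "level_map r (A ** B) i j = reduce p (level_coeff r A $ i $ j + level_coeff r B $ i $ j)" for i j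
    unfolding level_map_def level_coeff_mult[OF assms(1,2)] reduce_eq_iff_q
    using assms(3) by (simp add: dvd_power)
  then show ?thesis by (auto simp: level_map_def reduce_add)
qed

lemma level_map_eq_one_iff:
  assumes "A \<in> Gamma p r"
  shows "level_map r A = \<one>\<^bsub>sl_K (FpV p)\<^esub> \<longleftrightarrow> A \<in> Gamma p (Suc r)"
proof -
  have "level_map r A = \<one>\<^bsub>sl_K (FpV p)\<^esub> \<longleftrightarrow> mat_dvd q (level_coeff r A)"
    by (simp add: level_map_def fun_eq_iff mat_dvd_def reduce_eq_zero_iff_q)
  also have "\<dots> \<longleftrightarrow> mat_dvd (q ^ Suc r) (A - mat 1)"
  proof
    assume "mat_dvd q (level_coeff r A)"
    then obtain Z where "level_coeff r A = smult_mat q Z" by (auto simp: mat_dvd_iff_smult_mat)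
    then have "A - mat 1 = smult_mat (q ^ Suc r) Z"
      using Gamma_eq_one_plus_level_coeff[OF assms] by (simp add: smult_mat_simps mult.commute)
    then show "mat_dvd (q ^ Suc r) (A - mat 1)" by (simp add: mat_dvd_smult_mat)
  next
    assume "mat_dvd (q ^ Suc r) (A - mat 1)"
    then obtain Y where "A - mat 1 = smult_mat (q ^ r) (smult_mat q Y)"
      by (auto simp: mat_dvd_iff_smult_mat smult_mat_simps mult.commute)
    then show "mat_dvd q (level_coeff r A)" by (simp add: level_coeff_eqI mat_dvd_smult_mat)
  qed
  finally show ?thesis using assms by (simp add: Gamma_iff_q)
qed

lemma comm_group_sl_FpV: "comm_group (sl_K (FpV p) :: ('n::finite \<Rightarrow> 'n \<Rightarrow> 'a set) monoid)"
  by (rule abelian_group.comm_group_sl_K[OF ring.is_abelian_group[OF cring.axioms(1)[OF cring_FpV]]])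

lemma group_hom_level_map:
  assumes "r \<ge> 1"
  shows "group_hom ((SL_grp :: ('a^'n::finite^'n) monoid)\<lparr>carrier := Gamma p r\<rparr>) (sl_K (FpV p)) (level_map r)"
proof -
  have "level_map r \<in> hom ((SL_grp :: ('a^'n^'n) monoid)\<lparr>carrier := Gamma p r\<rparr>) (sl_K (FpV p))"
    unfolding hom_def using level_map_closed[OF _ assms] level_map_mult[OF _ _ assms]
    by (auto simp del: sl_K_simps)
  then show ?thesis
    using group_Gamma comm_group.axioms(2)[OF comm_group_sl_FpV]
    by (auto simp: group_hom_def group_hom_axioms_def)
qed

lemma kernel_level_map:
  "kernel ((SL_grp :: ('a^'n::finite^'n) monoid)\<lparr>carrier := Gamma p r\<rparr>) (sl_K (FpV p)) (level_map r)
     = Gamma p (Suc r)"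
  using level_map_eq_one_iff Gamma_antimono[of r "Suc r" p] by (auto simp: kernel_def)

definition liftable :: "nat \<Rightarrow> 'a^'n::finite^'n \<Rightarrow> bool" where
  "liftable r N \<longleftrightarrow> (\<exists>A. det A = 1 \<and> mat_dvd (q ^ Suc r) (A - mat 1 - smult_mat (q ^ r) N))"

lemma liftableI: "det (mat 1 + smult_mat (q ^ r) N) = 1 \<Longrightarrow> liftable r N"
  unfolding liftable_def by (rule exI[of _ "mat 1 + smult_mat (q ^ r) N"]) (simp add: mat_dvd_def)

lemma liftable_zero: "liftable r 0"
  by (rule liftableI) (simp add: smult_mat_def zero_vec_def[symmetric])

lemma liftable_add:
  assumes "r \<ge> 1" "liftable r N1" "liftable r N2"
  shows "liftable r (N1 + N2)"
proof -
  let ?e = "q ^ r"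
  obtain A1 where A1: "det A1 = 1" "mat_dvd (q ^ Suc r) (A1 - mat 1 - smult_mat ?e N1)"
    using assms(2) by (auto simp: liftable_def)
  obtain A2 where A2: "det A2 = 1" "mat_dvd (q ^ Suc r) (A2 - mat 1 - smult_mat ?e N2)"
    using assms(3) by (auto simp: liftable_def)
  have level_r: "mat_dvd ?e (A - mat 1)" if "mat_dvd (q ^ Suc r) (A - mat 1 - smult_mat ?e N)" for A N
  proof -
    have "mat_dvd ?e (A - mat 1 - smult_mat ?e N)"
      by (rule mat_dvd_trans[OF that le_imp_power_dvd]) simp
    then have "mat_dvd ?e (A - mat 1 - smult_mat ?e N + smult_mat ?e N)"
      by (rule mat_dvd_add[OF _ mat_dvd_smult_mat])
    then show ?thesis by simp
  qed
  have "q ^ Suc r dvd ?e * ?e"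
    using assms(1) by (simp add: mult_dvd_mono dvd_power)
  then have product: "mat_dvd (q ^ Suc r) ((A1 - mat 1) ** (A2 - mat 1))"
    using mat_dvd_mult[OF level_r[OF A1(2)] level_r[OF A2(2)]] by (rule mat_dvd_trans[rotated])
  have "A1 ** A2 - mat 1 - smult_mat ?e (N1 + N2)
      = (A1 - mat 1) ** (A2 - mat 1) + (A1 - mat 1 - smult_mat ?e N1) + (A2 - mat 1 - smult_mat ?e N2)"
    by (simp add: matrix_mult_minus_one smult_mat_simps(4)[symmetric] algebra_simps)
  also have "mat_dvd (q ^ Suc r) \<dots>"
    using product A1(2) A2(2) by (intro mat_dvd_add)
  finally have "mat_dvd (q ^ Suc r) (A1 ** A2 - mat 1 - smult_mat ?e (N1 + N2))" .
  moreover have "det (A1 ** A2) = 1" using A1 A2 by (simp add: det_mul)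
  ultimately show ?thesis unfolding liftable_def by blast
qed

lemma liftable_sum:
  assumes "r \<ge> 1" "\<And>k. k \<in> S \<Longrightarrow> liftable r (f k)"
  shows "liftable r (sum f S)"
  using assms(2)
proof (induction S rule: infinite_finite_induct)
  case (insert x S)
  then show ?case by (simp add: liftable_add[OF assms(1)])
qed (simp_all add: liftable_zero)

lemma liftable_cong_mod_q:
  assumes "liftable r N" "mat_dvd q (N' - N)"
  shows "liftable r N'"
proof -
  let ?e = "q ^ r"
  obtain A where A: "det A = 1" "mat_dvd (q ^ Suc r) (A - mat 1 - smult_mat ?e N)"
    using assms(1) by (auto simp: liftable_def)
  have eq: "A - mat 1 - smult_mat ?e N' = (A - mat 1 - smult_mat ?e N) - smult_mat ?e (N' - N)"
    by (simp add: smult_mat_simps(5)[symmetric])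
  have "mat_dvd (?e * q) (smult_mat ?e (N' - N))" by (rule mat_dvd_smult_mat_mult[OF assms(2)])
  then have "mat_dvd (q ^ Suc r) (A - mat 1 - smult_mat ?e N')"
    unfolding eq by (intro mat_dvd_diff A(2)) (simp add: mult.commute)
  then show ?thesis using A(1) unfolding liftable_def by blast
qed

lemma liftable_mat_unit: "i \<noteq> j \<Longrightarrow> liftable r (mat_unit c i j)"
proof (rule liftableI)
  assume "i \<noteq> j"
  have "smult_mat (q ^ r) (mat_unit c i j) = smult_mat (q ^ r * c) (mat_unit 1 i j)"
    by (simp add: vec_eq_iff)
  then show "det (mat 1 + smult_mat (q ^ r) (mat_unit c i j)) = 1"
    using det_transvection[OF \<open>i \<noteq> j\<close>] by simp
qed

lemma liftable_diag_difference:
  assumes "r \<ge> 1" "i \<noteq> j"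
  shows "liftable r (mat_unit c i i - mat_unit c j j)"
proof -
  let ?N = "mat_unit c i i + mat_unit c i j - mat_unit c j i - mat_unit c j j"
  have "smult_mat (q ^ r) ?N
      = smult_mat (q ^ r * c) (mat_unit 1 i i + mat_unit 1 i j - mat_unit 1 j i - mat_unit 1 j j)"
    by (simp add: vec_eq_iff)
  then have "liftable r ?N" using det_one_plus_square_zero[OF assms(2)] by (intro liftableI) simp
  then have "liftable r (?N + mat_unit (- c) i j + mat_unit c j i)"
    using assms by (intro liftable_add liftable_mat_unit) auto
  moreover have "?N + mat_unit (- c) i j + mat_unit c j i = mat_unit c i i - mat_unit c j j"
    using assms by (auto simp: vec_eq_iff)
  ultimately show ?thesis by simp
qed

text \<open>Modulo \<open>q\<close>, \<open>X\<close> is the sum of its off-diagonal entries times matrix units and of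
  the \<open>X\<^sub>a\<^sub>a (E\<^sub>a\<^sub>a - E\<^sub>i\<^sub>0\<^sub>i\<^sub>0)\<close>; the two differ only at \<open>(i\<^sub>0, i\<^sub>0)\<close>, by \<open>trace X\<close>.\<close>

lemma liftable_if_q_dvd_trace:
  fixes X :: "'a^'n::finite^'n"
  assumes "r \<ge> 1" and "q dvd trace X"
  shows "liftable r X"
proof -
  obtain i0 :: 'n where True by simp
  let ?off = "\<Sum>a\<in>UNIV. \<Sum>b\<in>UNIV - {a}. mat_unit (X $ a $ b) a b"
  let ?diag = "\<Sum>a\<in>UNIV - {i0}. mat_unit (X $ a $ a) a a - mat_unit (X $ a $ a) i0 i0"
  have "liftable r (?off + ?diag)"
    using assms(1) by (intro liftable_add liftable_sum liftable_mat_unit liftable_diag_difference) auto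
  moreover have "?off $ i $ j = (if i \<noteq> j then X $ i $ j else 0)" for i j
  proof -
    have "?off $ i $ j = (\<Sum>a\<in>UNIV. if i = a then \<Sum>b\<in>UNIV - {a}. if j = b then X $ a $ b else 0 else 0)"
      unfolding sum_component by (intro sum.cong refl) auto
    also have "\<dots> = (\<Sum>b\<in>UNIV - {i}. if j = b then X $ i $ b else 0)"
      by (simp only: sum.delta' finite UNIV_I if_True)
    finally show ?thesis by (simp add: sum.delta')
  qed
  moreover have "?diag $ i $ j = (if i \<noteq> j then 0
      else if i = i0 then - (\<Sum>a\<in>UNIV - {i0}. X $ a $ a) else X $ i $ i)" for i j
  proof (cases "i = j")
    case False
    then show ?thesis unfolding sum_component by (auto intro!: sum.neutral split: if_splits)
  qed (auto simp add: sum_component sum_subtractf sum.delta')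
  moreover have "trace X = X $ i0 $ i0 + (\<Sum>a\<in>UNIV - {i0}. X $ a $ a)"
    unfolding trace_def by (simp add: sum.remove)
  ultimately show ?thesis
    using assms(2) by (elim liftable_cong_mod_q) (auto simp: mat_dvd_def)
qed

lemma level_map_surj:
  assumes "r \<ge> 1"
  shows "level_map r ` Gamma p r = carrier (sl_K (FpV p) :: ('n::finite \<Rightarrow> 'n \<Rightarrow> 'a set) monoid)"
proof
  show "level_map r ` Gamma p r \<subseteq> carrier (sl_K (FpV p) :: ('n \<Rightarrow> 'n \<Rightarrow> 'a set) monoid)"
    using level_map_closed[OF _ assms] by blast
next
  show "carrier (sl_K (FpV p) :: ('n \<Rightarrow> 'n \<Rightarrow> 'a set) monoid) \<subseteq> level_map r ` Gamma p r"
  proof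
    fix M :: "'n \<Rightarrow> 'n \<Rightarrow> 'a set"
    assume M: "M \<in> carrier (sl_K (FpV p))"
    then have "\<forall>i j. \<exists>x. reduce p x = M i j" by (simp add: carrier_FpV) (metis rangeE)
    then obtain f where f: "reduce p (f i j) = M i j" for i j by metis
    define X :: "'a^'n^'n" where "X = (\<chi> i j. f i j)"
    have X: "reduce p (X $ i $ j) = M i j" for i j by (simp add: X_def f)
    have "reduce p (trace X) = trace_K (FpV p) M"
      unfolding trace_def trace_K_def by (simp add: reduce_sum X)
    then have "q dvd trace X" using M by (simp add: reduce_eq_zero_iff_q)
    then obtain A where A: "det A = 1" "mat_dvd (q ^ Suc r) (A - mat 1 - smult_mat (q ^ r) X)"
      using liftable_if_q_dvd_trace[OF assms] unfolding liftable_def by blast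
    then obtain Z where "A - mat 1 - smult_mat (q ^ r) X = smult_mat (q ^ Suc r) Z"
      by (auto simp: mat_dvd_iff_smult_mat)
    then have eq: "A - mat 1 = smult_mat (q ^ r) (X + smult_mat q Z)"
      by (simp add: vec_eq_iff algebra_simps)
    then have "A \<in> Gamma p r" using A(1) by (auto simp: Gamma_iff_q mat_dvd_iff_smult_mat)
    moreover have "level_map r A = M"
      using level_coeff_eqI[OF eq] by (simp add: level_map_def fun_eq_iff X[symmetric] reduce_eq_iff_q)
    ultimately show "M \<in> level_map r ` Gamma p r" by blast
  qed
qed

lemma grp_comm_expansion:
  fixes x y :: "'a^'n::finite^'n"
  assumes x: "x \<in> Gamma p a" and y: "y \<in> Gamma p b" and "a \<ge> 1" "b \<ge> 1"
  defines "C \<equiv> level_coeff a x ** level_coeff b y - level_coeff b y ** level_coeff a x"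
  shows "\<exists>W. grp_comm x y - mat 1 = smult_mat (q ^ (a + b)) (C + smult_mat q W)"
proof -
  let ?X = "level_coeff a x" and ?Y = "level_coeff b y"
  let ?W = "inv\<^bsub>SL_grp\<^esub> x ** inv\<^bsub>SL_grp\<^esub> y"
  have dx: "det x = 1" and dy: "det y = 1" using x y by (auto simp: Gamma_iff_q)
  have xf: "x = mat 1 + smult_mat (q ^ a) ?X" by (rule Gamma_eq_one_plus_level_coeff[OF x])
  have yf: "y = mat 1 + smult_mat (q ^ b) ?Y" by (rule Gamma_eq_one_plus_level_coeff[OF y])
  have "x ** y - y ** x
      = smult_mat (q ^ a) ?X ** smult_mat (q ^ b) ?Y - smult_mat (q ^ b) ?Y ** smult_mat (q ^ a) ?X"
    by (subst (1 2) xf, subst (1 2) yf) (simp add: matrix_add_ldistrib matrix_add_rdistrib algebra_simps)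
  also have "\<dots> = smult_mat (q ^ (a + b)) C"
    unfolding smult_mat_simps(1) C_def by (simp add: smult_mat_simps(5) power_add mult.commute)
  finally have commutes_mod: "x ** y - y ** x = smult_mat (q ^ (a + b)) C" .
  have "inv\<^bsub>SL_grp\<^esub> x \<in> Gamma p 1" "inv\<^bsub>SL_grp\<^esub> y \<in> Gamma p 1"
    using Gamma_inv[OF x] Gamma_inv[OF y] Gamma_antimono[of 1 a p] Gamma_antimono[of 1 b p] assms
    by auto
  then have W: "?W \<in> Gamma p 1" by (rule Gamma_mult)
  have "?W ** (y ** x) = inv\<^bsub>SL_grp\<^esub> x ** ((inv\<^bsub>SL_grp\<^esub> y ** y) ** x)"
    by (simp add: matrix_mul_assoc)
  then have "?W ** (y ** x) = mat 1" using SL_grp_inv[OF dx] SL_grp_inv[OF dy] by simp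
  moreover have "grp_comm x y = ?W ** (x ** y)" by (simp add: grp_comm_def matrix_mul_assoc)
  ultimately have "grp_comm x y - mat 1 = ?W ** (x ** y - y ** x)"
    by (simp add: matrix_diff_ldistrib)
  also have "\<dots> = (mat 1 + smult_mat q (level_coeff 1 ?W)) ** smult_mat (q ^ (a + b)) C"
    using Gamma_eq_one_plus_level_coeff[OF W] commutes_mod by simp
  also have "\<dots> = smult_mat (q ^ (a + b)) (C + smult_mat q (level_coeff 1 ?W ** C))"
    by (simp add: matrix_add_rdistrib smult_mat_simps vec_eq_iff algebra_simps)
  finally show ?thesis by blast
qed

lemma grp_comm_Gamma:
  fixes x y :: "'a^'n::finite^'n"
  assumes x: "x \<in> Gamma p a" and y: "y \<in> Gamma p b" and "a \<ge> 1" "b \<ge> 1"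
  shows "grp_comm x y \<in> Gamma p (a + b)"
proof -
  have dx: "det x = 1" and dy: "det y = 1" using x y by (auto simp: Gamma_iff_q)
  then have "det (grp_comm x y) = 1"
    unfolding grp_comm_def using SL_grp_inv[OF dx] SL_grp_inv[OF dy] by (simp add: det_mul)
  with grp_comm_expansion[OF assms] show ?thesis
    by (auto simp: Gamma_iff_q mat_dvd_iff_smult_mat)
qed

lemma level_map_grp_comm:
  fixes x y :: "'a^'n::finite^'n"
  assumes x: "x \<in> Gamma p a" and y: "y \<in> Gamma p b" and "a \<ge> 1" "b \<ge> 1"
  shows "level_map (a + b) (grp_comm x y) = lie_bracket_K (FpV p) (level_map a x) (level_map b y)"
proof (intro ext)
  fix i j
  let ?C = "level_coeff a x ** level_coeff b y - level_coeff b y ** level_coeff a x"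
  obtain W where "grp_comm x y - mat 1 = smult_mat (q ^ (a + b)) (?C + smult_mat q W)"
    using grp_comm_expansion[OF assms] by blast
  then have "level_coeff (a + b) (grp_comm x y) = ?C + smult_mat q W" by (rule level_coeff_eqI)
  then have "level_map (a + b) (grp_comm x y) i j = reduce p (?C $ i $ j)"
    unfolding level_map_def reduce_eq_iff_q by simp
  also have "\<dots> = lie_bracket_K (FpV p) (level_map a x) (level_map b y) i j"
    unfolding lie_bracket_K_def mat_mul_K_def level_map_def
    by (simp add: matrix_matrix_mult_def reduce_diff reduce_sum reduce_mult)
  finally show "level_map (a + b) (grp_comm x y) i j = lie_bracket_K (FpV p) (level_map a x) (level_map b y) i j" .
qed

lemma group_gr_deg:
  assumes "r \<ge> 1"
  shows "group (gr_deg p r :: ('a^'n::finite^'n) set monoid)"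
proof -
  interpret group_hom "(SL_grp :: ('a^'n^'n) monoid)\<lparr>carrier := Gamma p r\<rparr>" "sl_K (FpV p)" "level_map r"
    by (rule group_hom_level_map[OF assms])
  show ?thesis
    unfolding gr_deg_def using normal_kernel unfolding kernel_level_map
    by (rule normal.factorgroup_is_group)
qed

lemma gr_deg_iso_sl:
  assumes "r \<ge> 1"
  shows "(\<lambda>X. the_elem (level_map r ` X))
           \<in> iso (gr_deg p r :: ('a^'n::finite^'n) set monoid) (sl_K (FpV p))"
proof -
  interpret group_hom "(SL_grp :: ('a^'n^'n) monoid)\<lparr>carrier := Gamma p r\<rparr>" "sl_K (FpV p)" "level_map r"
    by (rule group_hom_level_map[OF assms])
  show ?thesis
    using FactGroup_iso_set level_map_surj[OF assms] unfolding kernel_level_map gr_deg_def by simp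
qed

end

section \<open>Quotients by generated subgroups\<close>

lemma (in group_hom) the_elem_image_kernel_coset:
  assumes "g \<in> carrier G"
  shows "the_elem (h ` (kernel G H h #>\<^bsub>G\<^esub> g)) = h g"
proof -
  have "h ` (kernel G H h #>\<^bsub>G\<^esub> g) = {h g}"
    using assms by (auto simp: kernel_def r_coset_def intro!: imageI)
  then show ?thesis by simp
qed

lemma iso_FactGroup_generate:
  assumes f: "f \<in> iso G H" and "group G" "comm_group H" and B: "B \<subseteq> carrier G"
  shows "G Mod generate G B \<cong> H Mod generate H (f ` B)"
proof -
  interpret G: group G by fact
  interpret H: comm_group H by fact
  interpret f: group_hom G H f
    using f by (simp add: group_hom_def group_hom_axioms_def iso_imp_homomorphism G.is_group H.is_group)
  let ?N = "generate H (f ` B)"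
  have inj: "inj_on f (carrier G)" and surj: "f ` carrier G = carrier H"
    using f by (auto simp: iso_def bij_betw_def)
  have N: "subgroup ?N H" using B by (intro H.generate_is_subgroup) auto
  have N_img: "?N = f ` generate G B" by (rule f.generate_img[OF B])
  interpret N: normal ?N H by (rule H.subgroup_imp_normal[OF N])
  define h where "h x = ?N #>\<^bsub>H\<^esub> f x" for x
  have "h \<in> hom G (H Mod ?N)"
    unfolding h_def using hom_compose[OF f.homh N.r_coset_hom_Mod] by (simp add: comp_def)
  then interpret h: group_hom G "H Mod ?N" h
    by (simp add: group_hom_def group_hom_axioms_def G.is_group N.factorgroup_is_group)
  have "h ` carrier G = (\<lambda>a. ?N #>\<^bsub>H\<^esub> a) ` carrier H"
    unfolding h_def surj[symmetric] by (simp add: image_image)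
  then have "h ` carrier G = carrier (H Mod ?N)"
    by (auto simp: FactGroup_def RCOSETS_def)
  moreover have "kernel G (H Mod ?N) h = generate G B"
  proof -
    have "h x = \<one>\<^bsub>H Mod ?N\<^esub> \<longleftrightarrow> x \<in> generate G B" if x: "x \<in> carrier G" for x
    proof -
      have fx: "f x \<in> carrier H" using x by simp
      have "h x = \<one>\<^bsub>H Mod ?N\<^esub> \<longleftrightarrow> ?N #>\<^bsub>H\<^esub> f x = ?N"
        by (simp add: h_def FactGroup_def)
      also have "\<dots> \<longleftrightarrow> f x \<in> ?N"
        using H.coset_join1[OF _ fx N] H.coset_join2[OF fx N] by blast
      also have "\<dots> \<longleftrightarrow> x \<in> generate G B"
        unfolding N_img using inj_onD[OF inj] x G.generate_incl[OF B] by blast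
      finally show ?thesis .
    qed
    then show ?thesis using G.generate_incl[OF B] by (auto simp: kernel_def)
  qed
  ultimately show ?thesis using h.FactGroup_iso by simp
qed

section \<open>First homology of the graded Lie algebra\<close>

context p_torsion_free
begin

lemma the_elem_level_map_coset_grp_comm:
  fixes x y :: "'a^'n::finite^'n"
  assumes "1 \<le> a" "1 \<le> b" and x: "x \<in> Gamma p a" and y: "y \<in> Gamma p b"
  shows "the_elem (level_map (a + b) ` (Gamma p (Suc (a + b)) #>\<^bsub>SL_grp\<^esub> grp_comm x y))
           = lie_bracket_K (FpV p) (level_map a x) (level_map b y)"
proof -
  interpret level: group_hom "(SL_grp :: ('a^'n^'n) monoid)\<lparr>carrier := Gamma p (a + b)\<rparr>"
      "sl_K (FpV p)" "level_map (a + b)"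
    by (rule group_hom_level_map) (use assms in simp)
  have "grp_comm x y \<in> Gamma p (a + b)" by (rule grp_comm_Gamma[OF x y assms(1,2)])
  then show ?thesis
    using level.the_elem_image_kernel_coset[of "grp_comm x y"] level_map_grp_comm[OF x y assms(1,2)]
    by (simp add: kernel_level_map r_coset_def)
qed

lemma image_brackets_deg:
  assumes "i \<ge> 2"
  shows "(\<lambda>X. the_elem (level_map i ` X)) ` (brackets_deg p i :: ('a^'n::finite^'n) set set)
       = {lie_bracket_K (FpV p) A B | A B. A \<in> carrier (sl_K (FpV p)) \<and> B \<in> carrier (sl_K (FpV p))}"
    (is "?\<iota> ` _ = ?brackets")
proof -
  have \<iota>_bracket: "?\<iota> (Gamma p (Suc i) #>\<^bsub>SL_grp\<^esub> grp_comm x y)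
      = lie_bracket_K (FpV p) (level_map a x) (level_map b y)"
    if "1 \<le> a" "1 \<le> b" "a + b = i" "x \<in> Gamma p a" "y \<in> Gamma p b" for a b and x y :: "'a^'n^'n"
    using the_elem_level_map_coset_grp_comm[of a b x y] that by simp
  show ?thesis
  proof
    show "?\<iota> ` brackets_deg p i \<subseteq> ?brackets"
    proof
      fix z assume "z \<in> ?\<iota> ` brackets_deg p i"
      then obtain x y :: "'a^'n^'n" and a b
        where "z = ?\<iota> (Gamma p (Suc i) #>\<^bsub>SL_grp\<^esub> grp_comm x y)"
          and "1 \<le> a" "1 \<le> b" "a + b = i" "x \<in> Gamma p a" "y \<in> Gamma p b"
        unfolding brackets_deg_def by blast
      then show "z \<in> ?brackets" using \<iota>_bracket level_map_closed by blast
    qed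
  next
    show "?brackets \<subseteq> ?\<iota> ` brackets_deg p i"
    proof
      fix z assume "z \<in> ?brackets"
      then obtain A B where z: "z = lie_bracket_K (FpV p) A B"
        and "A \<in> carrier (sl_K (FpV p))" "B \<in> carrier (sl_K (FpV p))" by blast
      moreover have ab: "1 \<le> i - 1" "1 + (i - 1) = i" using assms by auto
      ultimately have "A \<in> level_map 1 ` Gamma p 1" "B \<in> level_map (i - 1) ` Gamma p (i - 1)"
        by (simp_all only: level_map_surj order.refl)
      then obtain x y where x: "x \<in> Gamma p 1" "A = level_map 1 x"
        and y: "y \<in> Gamma p (i - 1)" "B = level_map (i - 1) y" by blast
      have "Gamma p (Suc i) #>\<^bsub>SL_grp\<^esub> grp_comm x y \<in> brackets_deg p i"
        unfolding brackets_deg_def using x(1) y(1) ab by blast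
      moreover have "z = ?\<iota> (Gamma p (Suc i) #>\<^bsub>SL_grp\<^esub> grp_comm x y)"
        unfolding z x(2) y(2) using \<iota>_bracket[OF order.refl ab(1,2) x(1) y(1)] by simp
      ultimately show "z \<in> ?\<iota> ` brackets_deg p i" by blast
    qed
  qed
qed

lemma brackets_deg_subset: "brackets_deg p i \<subseteq> carrier (gr_deg p i :: ('a^'n::finite^'n) set monoid)"
proof
  fix Z assume "Z \<in> (brackets_deg p i :: ('a^'n^'n) set set)"
  then obtain x y :: "'a^'n^'n" and a b where Z: "Z = Gamma p (Suc i) #>\<^bsub>SL_grp\<^esub> grp_comm x y"
    and "1 \<le> a" "1 \<le> b" "a + b = i" "x \<in> Gamma p a" "y \<in> Gamma p b"
    unfolding brackets_deg_def by blast
  then have "grp_comm x y \<in> Gamma p i" using grp_comm_Gamma by blast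
  then show "Z \<in> carrier (gr_deg p i)"
    unfolding Z gr_deg_def FactGroup_def RCOSETS_def r_coset_def by auto
qed

lemma H1_gr_deg_one_iso:
  "(H1_gr_deg p 1 :: ('a^'n::finite^'n) set set monoid) \<cong> (sl_K (FpV p) :: ('n \<Rightarrow> 'n \<Rightarrow> 'a set) monoid)"
proof -
  interpret gr: group "gr_deg p 1 :: ('a^'n^'n) set monoid" by (rule group_gr_deg) simp
  have no_brackets: "brackets_deg p 1 = ({} :: ('a^'n^'n) set set)" by (auto simp: brackets_deg_def)
  have "H1_gr_deg p 1 = (gr_deg p 1 :: ('a^'n^'n) set monoid) Mod {\<one>\<^bsub>gr_deg p 1\<^esub>}"
    unfolding H1_gr_deg_def no_brackets gr.generate_empty ..
  also have "\<dots> \<cong> (gr_deg p 1 :: ('a^'n^'n) set monoid)" by (rule is_isoI[OF gr.trivial_factor_iso])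
  also have "\<dots> \<cong> (sl_K (FpV p) :: ('n \<Rightarrow> 'n \<Rightarrow> 'a set) monoid)" by (rule is_isoI[OF gr_deg_iso_sl]) simp
  finally show ?thesis .
qed

lemma H1_gr_deg_iso:
  assumes "i \<ge> 2"
  shows "(H1_gr_deg p i :: ('a^'n::finite^'n) set set monoid)
           \<cong> (H1_sl_K (FpV p) :: ('n \<Rightarrow> 'n \<Rightarrow> 'a set) set monoid)"
proof -
  have "i \<ge> 1" using assms by simp
  from iso_FactGroup_generate[OF gr_deg_iso_sl[OF \<open>i \<ge> 1\<close>] group_gr_deg[OF \<open>i \<ge> 1\<close>]
      comm_group_sl_FpV brackets_deg_subset]
  show ?thesis unfolding H1_gr_deg_def H1_sl_K_def image_brackets_deg[OF assms] .
qed

end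

theorem corollary2p5:
  fixes V :: "'a::comm_ring_1 set" and p :: nat
  assumes "free_Z_basis V"
    and "CARD('n::finite) \<ge> 2"
    and "prime p"
  shows "(H1_gr_deg p 1 :: ('a ^ 'n ^ 'n) set set monoid)
            \<cong> (sl_K (FpV p :: 'a set ring) :: ('n \<Rightarrow> 'n \<Rightarrow> 'a set) monoid)
         \<and> (\<forall>i\<ge>2. (H1_gr_deg p i :: ('a ^ 'n ^ 'n) set set monoid)
            \<cong> (H1_sl_K (FpV p :: 'a set ring) :: ('n \<Rightarrow> 'n \<Rightarrow> 'a set) set monoid))"
proof -
  \<comment> \<open>Primality of \<open>p\<close> is used only through \<open>p > 0\<close>.\<close>
  interpret p_torsion_free p "of_nat p :: 'a"
    using free_Z_basis_torsion_free[OF assms(1) prime_gt_0_nat[OF assms(3)]]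
    by unfold_locales simp_all
  show ?thesis using H1_gr_deg_one_iso H1_gr_deg_iso by blast
qed

end
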